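(* Let $f:\mathbb R^n\to\mathbb R$ be convex and differentiable with $f(x)\le f(y)+\langle\nabla f(y),x-y\rangle+\frac L2\|x-y\|_2^2$ for all $x,y\in\mathbb R^n$, attaining its minimum $f_*$ at $x_*$. Apply RSTM (see context) on $Q=\mathbb R^n$ with $\rho=n$, $V[z](x)=\frac L2\|x-z\|_2^2$ and oracle $G(x)=n(\langle\nabla f(x),e\rangle+\xi(x))e$, where $e$ is uniformly distributed on the Euclidean unit sphere $\{s\in\mathbb R^n:\|s\|_2=1\}$ and the directional-derivative error satisfies $|\xi(x)|\le\Delta$ for all $x$. Let $P_0^2=(1-\frac1n)(f(x_0)-f_* )+\frac L2\|u_0-x_*\|_2^2$. (1) Fix $k\ge1$. If at all iterations up to $k$ the error level satisfies $\Delta\le\frac{P_0\sqrt L}{4nA_k}$, then $\mathbb Ef(x_k)-f_*\le\frac{6n^2P_0^2}{(k-1+2n)^2}$. (2) In general, for all $k\ge1$, $\mathbb Ef(x_k)-f_*\le\frac{8n^2P_0^2}{(k-1+2n)^2}+\frac4L(k-1+2n)^2\Delta^2$.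
   Context: RSTM with parameter $\rho\ge1$, feasible set $Q$, Bregman divergence $V[\cdot](\cdot)$ and random oracle $G$ (a random vector in $E^*$ for each query point, sampled afresh and independently of the past at each call): choose $u_0\in Q$, set $A_0=\alpha_0=1-\frac1\rho$, $x_0=y_0=u_0$; for $k\ge0$, $\alpha_{k+1}$ is the largest root of $A_k+\alpha_{k+1}=\rho^2\alpha_{k+1}^2$, $A_{k+1}=A_k+\alpha_{k+1}$, $y_{k+1}=\frac{\alpha_{k+1}u_k+A_kx_k}{A_{k+1}}$, $u_{k+1}=\arg\min_{x\in Q}\{V[u_k](x)+\alpha_{k+1}\langle G(y_{k+1}),x\rangle\}$, $x_{k+1}=y_{k+1}+\rho\frac{\alpha_{k+1}}{A_{k+1}}(u_{k+1}-u_k)$. $\mathbb E$ is the expectation over all randomness up to iteration $k$. *)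

theory Defs
  imports "HOL-Analysis.Analysis" "HOL-Probability.Probability"
begin

text \<open>RSTM step sizes: alpha_{k+1} is the largest root of A_k + a = rho^2 a^2.\<close>

definition rstm_alpha_next :: "real \<Rightarrow> real \<Rightarrow> real" where
  "rstm_alpha_next \<rho> Ak = (1 + sqrt (1 + 4 * \<rho>\<^sup>2 * Ak)) / (2 * \<rho>\<^sup>2)"

fun rstm_A :: "real \<Rightarrow> nat \<Rightarrow> real" where
  "rstm_A \<rho> 0 = 1 - 1 / \<rho>"
| "rstm_A \<rho> (Suc k) = rstm_A \<rho> k + rstm_alpha_next \<rho> (rstm_A \<rho> k)"

text \<open>State (x_k, u_k) of RSTM.  The oracle G takes the query point and the fresh
  random sample of the current iteration; omega k is the sample used at step k -> k+1.\<close>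

fun rstm_state :: "real \<Rightarrow> 'a::real_inner set \<Rightarrow> ('a \<Rightarrow> 'a \<Rightarrow> real) \<Rightarrow>
    ('a \<Rightarrow> 'b \<Rightarrow> 'a) \<Rightarrow> 'a \<Rightarrow> (nat \<Rightarrow> 'b) \<Rightarrow> nat \<Rightarrow> 'a \<times> 'a" where
  "rstm_state \<rho> Q V G u0 \<omega> 0 = (u0, u0)"
| "rstm_state \<rho> Q V G u0 \<omega> (Suc k) =
     (let (x, u) = rstm_state \<rho> Q V G u0 \<omega> k;
          Ak = rstm_A \<rho> k;
          a = rstm_alpha_next \<rho> Ak;
          Ak1 = Ak + a;
          y = (1 / Ak1) *\<^sub>R (a *\<^sub>R u + Ak *\<^sub>R x);
          u' = arg_min (\<lambda>z. V u z + a * inner (G y (\<omega> k)) z) (\<lambda>z. z \<in> Q);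
          x' = y + (\<rho> * a / Ak1) *\<^sub>R (u' - u)
      in (x', u'))"

definition rstm_x where
  "rstm_x \<rho> Q V G u0 \<omega> k = fst (rstm_state \<rho> Q V G u0 \<omega> k)"

definition unif_sphere :: "'a::euclidean_space measure" where
  "unif_sphere = distr (uniform_measure lborel (ball 0 1)) borel (\<lambda>x. x /\<^sub>R norm x)"

definition sphere_seq_space :: "(nat \<Rightarrow> 'a::euclidean_space) measure" where
  "sphere_seq_space = PiM UNIV (\<lambda>_. unif_sphere)"

end

theory Submission
  imports Defs
begin

text \<open>
  The analysis follows the potential
  \<open>\<Phi>\<^sub>k = A\<^sub>k (f x\<^sub>k - f\<^sub>*) + L/2 \<parallel>u\<^sub>k - x\<^sub>*\<parallel>\<^sup>2\<close>.
  Since \<open>n\<^sup>2 \<alpha>\<^sub>k\<^sub>+\<^sub>1\<^sup>2 = A\<^sub>k\<^sub>+\<^sub>1\<close>, one step is a gradient step of length \<open>1/L\<close> along the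
  random direction \<open>e\<close> for \<open>x\<close> and a mirror step for \<open>u\<close>; smoothness, convexity and the
  exact expansion of \<open>\<parallel>u\<^sub>k\<^sub>+\<^sub>1 - x\<^sub>*\<parallel>\<^sup>2\<close> bound \<open>\<Phi>\<^sub>k\<^sub>+\<^sub>1\<close> by \<open>\<Phi>\<^sub>k\<close> plus terms that are
  linear or quadratic in \<open>e\<close>. The moments \<open>\<integral>e = 0\<close> and \<open>\<integral>e e\<^sup>T = I/n\<close> of the uniform
  distribution on the sphere make the first-order terms cancel in expectation, leaving
  \<open>\<bbbE>\<Phi>\<^sub>k\<^sub>+\<^sub>1 \<le> \<bbbE>\<Phi>\<^sub>k + A\<^sub>k\<^sub>+\<^sub>1 \<Delta>\<^sup>2/L\<close>. Summing, \<open>A\<^sub>k (\<bbbE>f x\<^sub>k - f\<^sub>*) \<le> P\<^sub>0\<^sup>2 + k A\<^sub>k \<Delta>\<^sup>2/L\<close>,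
  and \<open>A\<^sub>k \<ge> ((k - 1 + 2n)/(2n))\<^sup>2\<close> gives both rates.
\<close>

section \<open>The uniform distribution on the sphere\<close>

lemma prob_space_uniform_measure_ball:
  "prob_space (uniform_measure lborel (ball (0::'a::euclidean_space) 1))"
  by (rule prob_space_uniform_measure)
     (use emeasure_lborel_ball_finite[of "0::'a" 1] unit_ball_vol_pos[of "real DIM('a)"]
       in \<open>auto simp: emeasure_ball simp del: unit_ball_vol_pos\<close>)

lemma prob_space_unif_sphere: "prob_space (unif_sphere :: 'a::euclidean_space measure)"
  unfolding unif_sphere_def
  by (rule prob_space.prob_space_distr[OF prob_space_uniform_measure_ball]) simp

lemma sets_unif_sphere [simp, measurable_cong]: "sets unif_sphere = sets borel"
  and space_unif_sphere [simp]: "space unif_sphere = UNIV"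
  by (simp_all add: unif_sphere_def)

lemma AE_unif_sphere_norm: "AE e in (unif_sphere :: 'a::euclidean_space measure). norm e = 1"
proof -
  have "AE x in uniform_measure lborel (ball (0::'a) 1). x \<noteq> 0"
    by (rule AE_uniform_measureI) (use AE_lborel_singleton[of "0::'a"] in auto)
  then have "AE x in uniform_measure lborel (ball (0::'a) 1). norm (x /\<^sub>R norm x) = 1"
    by eventually_elim simp
  then show ?thesis
    unfolding unif_sphere_def by (subst AE_distr_iff) auto
qed

lemma borel_measurable_linear: "linear T \<Longrightarrow> T \<in> borel_measurable borel"
  for T :: "'a::euclidean_space \<Rightarrow> 'b::euclidean_space"
  by (rule borel_measurable_continuous_onI[OF linear_continuous_on_compose[OF continuous_on_id]])

text \<open>
  Both the ball and the radial projection commute with an orthogonal map, so the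
  invariance of Lebesgue measure is inherited by the sphere.
\<close>

lemma distr_unif_sphere_orthogonal:
  fixes T :: "'a::euclidean_space \<Rightarrow> 'a"
  assumes T: "orthogonal_transformation T" and lborel: "distr lborel borel T = lborel"
  shows "distr unif_sphere borel T = unif_sphere"
proof -
  let ?U = "uniform_measure lborel (ball (0::'a) 1)"
  have norm_T: "norm (T x) = norm x" for x
    using T by (rule orthogonal_transformation_norm)
  have [measurable]: "T \<in> borel_measurable borel"
    using T by (intro borel_measurable_linear orthogonal_transformation_linear)
  have ball: "distr ?U borel T = ?U"
  proof (rule measure_eqI)
    fix B assume "B \<in> sets (distr ?U borel T)"
    then have B[measurable]: "B \<in> sets borel" by simp
    have [measurable]: "T -` B \<in> sets borel"
      using measurable_sets_borel[of T borel B] by simp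
    have pre: "T -` (ball 0 1 \<inter> B) = ball 0 1 \<inter> T -` B"
      using norm_T by auto
    have "emeasure (distr ?U borel T) B
        = emeasure lborel (ball 0 1 \<inter> T -` B) / emeasure lborel (ball (0::'a) 1)"
      by (simp add: emeasure_distr emeasure_uniform_measure)
    also have "emeasure lborel (ball 0 1 \<inter> T -` B) = emeasure (distr lborel borel T) (ball 0 1 \<inter> B)"
      by (subst emeasure_distr) (auto simp: pre[symmetric])
    finally show "emeasure (distr ?U borel T) B = emeasure ?U B"
      by (simp add: lborel emeasure_uniform_measure)
  qed simp
  have "T \<circ> (\<lambda>x. x /\<^sub>R norm x) = (\<lambda>x. x /\<^sub>R norm x) \<circ> T"
    using T by (auto simp: orthogonal_transformation_scaleR norm_T)
  then have "distr unif_sphere borel T = distr (distr ?U borel T) borel (\<lambda>x. x /\<^sub>R norm x)"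
    unfolding unif_sphere_def by (simp add: distr_distr)
  then show ?thesis
    by (simp add: ball unif_sphere_def)
qed

lemma integral_unif_sphere_orthogonal:
  fixes T :: "'a::euclidean_space \<Rightarrow> 'a" and h :: "'a \<Rightarrow> real"
  assumes T: "orthogonal_transformation T" "distr lborel borel T = lborel"
    and h[measurable]: "h \<in> borel_measurable borel"
  shows "(\<integral>e. h (T e) \<partial>unif_sphere) = (\<integral>e. h e \<partial>unif_sphere)"
proof -
  have [measurable]: "T \<in> borel_measurable borel"
    using T by (intro borel_measurable_linear orthogonal_transformation_linear)
  have "(\<integral>e. h (T e) \<partial>unif_sphere) = (\<integral>e. h e \<partial>distr unif_sphere borel T)"
    by (rule integral_distr[symmetric]) auto
  then show ?thesis
    by (simp add: distr_unif_sphere_orthogonal[OF T(1,2)])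
qed

lemma prod_Basis_cart: "(\<Prod>b\<in>Basis. (v::real^'n) \<bullet> b) = (\<Prod>i\<in>UNIV. v $ i)"
  by (simp add: Basis_vec_def cart_eq_inner_axis axis_eq_axis prod.UNION_disjoint)

definition signed_permutation :: "('n::finite \<Rightarrow> 'n) \<Rightarrow> ('n \<Rightarrow> real) \<Rightarrow> real^'n \<Rightarrow> real^'n"
  where "signed_permutation p \<sigma> x = (\<chi> k. \<sigma> k * x $ p k)"

lemma orthogonal_transformation_signed_permutation:
  assumes p: "bij p" and \<sigma>: "\<And>k. \<sigma> k = 1 \<or> \<sigma> k = -1"
  shows "orthogonal_transformation (signed_permutation p \<sigma>)"
  unfolding orthogonal_transformation
proof
  show "linear (signed_permutation p \<sigma>)"
    by (rule linearI) (simp_all add: signed_permutation_def vec_eq_iff algebra_simps)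
  have "signed_permutation p \<sigma> x \<bullet> signed_permutation p \<sigma> x = x \<bullet> x" for x
  proof -
    have "signed_permutation p \<sigma> x \<bullet> signed_permutation p \<sigma> x
        = (\<Sum>k\<in>UNIV. (\<sigma> k)\<^sup>2 * (x $ p k * x $ p k))"
      by (simp add: signed_permutation_def inner_vec_def power2_eq_square algebra_simps)
    also have "\<dots> = (\<Sum>k\<in>UNIV. x $ p k * x $ p k)"
      using \<sigma> by (metis (no_types, lifting) mult_1 power2_minus power_one)
    also have "\<dots> = (\<Sum>k\<in>UNIV. x $ k * x $ k)"
      using sum.reindex[of p UNIV "\<lambda>k. x $ k * x $ k"] p by (simp add: bij_def)
    finally show ?thesis by (simp add: inner_vec_def)
  qed
  then show "\<forall>x. norm (signed_permutation p \<sigma> x) = norm x"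
    by (simp add: norm_eq_sqrt_inner)
qed

lemma vimage_signed_permutation_box:
  assumes p: "bij p" and \<sigma>: "\<And>k. \<sigma> k = 1 \<or> \<sigma> k = -1"
  shows "signed_permutation p \<sigma> -` box l u
    = box (\<chi> j. if \<sigma> (inv p j) = 1 then l $ inv p j else - u $ inv p j)
          (\<chi> j. if \<sigma> (inv p j) = 1 then u $ inv p j else - l $ inv p j)"
proof -
  have pq: "p (inv p j) = j" for j
    using p by (simp add: bij_def surj_f_inv_f)
  have "x \<in> signed_permutation p \<sigma> -` box l u
      \<longleftrightarrow> (\<forall>k. l $ k < \<sigma> k * x $ p k \<and> \<sigma> k * x $ p k < u $ k)" for x
    by (simp add: mem_box_cart signed_permutation_def)
  also have "\<dots> x \<longleftrightarrow> (\<forall>j. l $ inv p j < \<sigma> (inv p j) * x $ j \<and> \<sigma> (inv p j) * x $ j < u $ inv p j)" for x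
    using p by (metis bij_inv_eq_iff pq)
  also have "\<dots> x \<longleftrightarrow> x \<in> box (\<chi> j. if \<sigma> (inv p j) = 1 then l $ inv p j else - u $ inv p j)
          (\<chi> j. if \<sigma> (inv p j) = 1 then u $ inv p j else - l $ inv p j)" for x
    unfolding mem_box_cart using \<sigma>
    by (auto simp: vec_lambda_beta) (metis mult_minus_left mult_1 minus_less_iff less_minus_iff)+
  finally show ?thesis by blast
qed

lemma lborel_distr_signed_permutation:
  assumes p: "bij p" and \<sigma>: "\<And>k. \<sigma> k = 1 \<or> \<sigma> k = -1"
  shows "distr lborel borel (signed_permutation p \<sigma>) = lborel"
proof (rule lborel_eqI[symmetric])
  let ?T = "signed_permutation p \<sigma>"
  have [measurable]: "?T \<in> borel_measurable borel"
    by (intro borel_measurable_linear orthogonal_transformation_linear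
        orthogonal_transformation_signed_permutation p \<sigma>)
  fix l u :: "real^'a" assume le: "\<And>b. b \<in> Basis \<Longrightarrow> l \<bullet> b \<le> u \<bullet> b"
  then have le_components: "l $ i \<le> u $ i" for i
    using le[of "axis i 1"] by (simp add: cart_eq_inner_axis axis_in_Basis_iff)
  define l' :: "real^'a" where "l' = (\<chi> j. if \<sigma> (inv p j) = 1 then l $ inv p j else - u $ inv p j)"
  define u' :: "real^'a" where "u' = (\<chi> j. if \<sigma> (inv p j) = 1 then u $ inv p j else - l $ inv p j)"
  have "(\<Prod>j\<in>UNIV. u' $ j - l' $ j) = (\<Prod>j\<in>UNIV. u $ inv p j - l $ inv p j)"
    by (intro prod.cong) (auto simp: u'_def l'_def)
  also have "\<dots> = (\<Prod>k\<in>UNIV. u $ k - l $ k)"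
    using prod.reindex[of "inv p" UNIV "\<lambda>k. u $ k - l $ k"] p
    by (metis (mono_tags, lifting) bij_betw_def bij_imp_bij_inv comp_apply prod.cong)
  finally have volume: "(\<Prod>j\<in>UNIV. u' $ j - l' $ j) = (\<Prod>k\<in>UNIV. u $ k - l $ k)" .
  have "\<forall>b\<in>Basis. l' \<bullet> b \<le> u' \<bullet> b"
    using le_components \<sigma> by (fastforce simp: Basis_vec_def inner_axis l'_def u'_def)
  then have "emeasure (distr lborel borel ?T) (box l u) = (\<Prod>b\<in>Basis. (u' - l') \<bullet> b)"
    using vimage_signed_permutation_box[OF p \<sigma>, where l = l and u = u]
    by (simp add: emeasure_distr emeasure_lborel_box_eq l'_def u'_def)
  also have "\<dots> = (\<Prod>b\<in>Basis. (u - l) \<bullet> b)"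
    by (simp only: prod_Basis_cart vector_minus_component volume)
  finally show "emeasure (distr lborel borel ?T) (box l u) = (\<Prod>b\<in>Basis. (u - l) \<bullet> b)" .
qed simp

lemma integral_unif_sphere_signed_permutation:
  fixes h :: "real^'n::finite \<Rightarrow> real"
  assumes "bij p" "\<And>k. \<sigma> k = 1 \<or> \<sigma> k = -1" "h \<in> borel_measurable borel"
  shows "(\<integral>e. h (signed_permutation p \<sigma> e) \<partial>unif_sphere) = (\<integral>e. h e \<partial>unif_sphere)"
  using assms
  by (intro integral_unif_sphere_orthogonal orthogonal_transformation_signed_permutation
      lborel_distr_signed_permutation)

lemma integrable_unif_sphere_inner_mult:
  "integrable (unif_sphere :: 'a::euclidean_space measure) (\<lambda>e. inner v e * inner w e)"
proof -
  interpret prob_space "unif_sphere :: 'a measure" by (rule prob_space_unif_sphere)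
  show ?thesis
  proof (rule integrable_const_bound[where B = "norm v * norm w"])
    show "AE e in unif_sphere. norm (inner v e * inner w e) \<le> norm v * norm w"
      using AE_unif_sphere_norm
    proof eventually_elim
      case (elim e)
      then show ?case
        using Cauchy_Schwarz_ineq2[of v e] Cauchy_Schwarz_ineq2[of w e]
        by (simp add: abs_mult mult_mono)
    qed
  qed simp
qed

lemma integrable_unif_sphere_inner:
  "integrable (unif_sphere :: 'a::euclidean_space measure) (\<lambda>e. inner v e)"
proof -
  interpret prob_space "unif_sphere :: 'a measure" by (rule prob_space_unif_sphere)
  show ?thesis
  proof (rule integrable_const_bound[where B = "norm v"])
    show "AE e in unif_sphere. norm (inner v e) \<le> norm v"
      using AE_unif_sphere_norm
    proof eventually_elim
      case (elim e)
      then show ?case using Cauchy_Schwarz_ineq2[of v e] by simp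
    qed
  qed simp
qed

lemma lborel_distr_uminus_euclidean: "distr lborel borel uminus = (lborel :: 'a::euclidean_space measure)"
  using lborel_affine[of "-1" "0::'a"] by (simp add: density_1)

lemma integral_unif_sphere_inner:
  "(\<integral>e. inner v e \<partial>(unif_sphere :: 'a::euclidean_space measure)) = 0"
proof -
  have "(\<integral>e. inner v e \<partial>(unif_sphere :: 'a measure)) = (\<integral>e. inner v (- e) \<partial>unif_sphere)"
    by (rule integral_unif_sphere_orthogonal[symmetric])
       (simp_all add: orthogonal_transformation_neg lborel_distr_uminus_euclidean)
  then show ?thesis by simp
qed

lemma integrable_unif_sphere_component_mult:
  "integrable (unif_sphere :: (real^'n::finite) measure) (\<lambda>e. e $ i * e $ j)"
  using integrable_unif_sphere_inner_mult[of "axis i (1::real)" "axis j 1"] by (simp add: inner_axis')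

lemma integral_unif_sphere_component_mult_neq:
  fixes i j :: "'n::finite"
  assumes "i \<noteq> j"
  shows "(\<integral>e. e $ i * e $ j \<partial>(unif_sphere :: (real^'n) measure)) = 0"
proof -
  let ?\<sigma> = "\<lambda>k. if k = i then -1 else 1 :: real"
  have "(\<integral>e. e $ i * e $ j \<partial>(unif_sphere :: (real^'n) measure))
      = (\<integral>e. signed_permutation id ?\<sigma> e $ i * signed_permutation id ?\<sigma> e $ j \<partial>unif_sphere)"
    by (rule integral_unif_sphere_signed_permutation[symmetric]) auto
  also have "\<dots> = - (\<integral>e. e $ i * e $ j \<partial>unif_sphere)"
    using assms by (simp add: signed_permutation_def)
  finally show ?thesis by simp
qed

lemma integral_unif_sphere_component_square_swap:
  fixes i j :: "'n::finite"
  shows "(\<integral>e. e $ i * e $ i \<partial>(unif_sphere :: (real^'n) measure)) = (\<integral>e. e $ j * e $ j \<partial>unif_sphere)"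
proof -
  let ?p = "\<lambda>k. if k = i then j else if k = j then i else k"
  have "bij ?p"
    by (rule bij_betw_byWitness[where f' = ?p]) auto
  then have "(\<integral>e. signed_permutation ?p (\<lambda>_. 1) e $ i * signed_permutation ?p (\<lambda>_. 1) e $ i
      \<partial>(unif_sphere :: (real^'n) measure)) = (\<integral>e. e $ i * e $ i \<partial>unif_sphere)"
    by (intro integral_unif_sphere_signed_permutation) auto
  then show ?thesis
    by (simp add: signed_permutation_def)
qed

text \<open>The \<open>n\<close> diagonal second moments are equal and sum to \<open>\<integral>\<parallel>e\<parallel>\<^sup>2 = 1\<close>.\<close>

lemma integral_unif_sphere_component_mult:
  fixes i j :: "'n::finite"
  shows "(\<integral>e. e $ i * e $ j \<partial>(unif_sphere :: (real^'n) measure))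
    = (if i = j then 1 / real CARD('n) else 0)"
proof -
  let ?U = "unif_sphere :: (real^'n) measure"
  interpret prob_space ?U by (rule prob_space_unif_sphere)
  have "(\<Sum>j\<in>UNIV. \<integral>e. e $ j * e $ j \<partial>?U) = (\<integral>e. (\<Sum>j\<in>UNIV. e $ j * e $ j) \<partial>?U)"
    by (simp add: integrable_unif_sphere_component_mult)
  also have "\<dots> = (\<integral>e. 1 \<partial>?U)"
    by (rule integral_cong_AE)
       (use AE_unif_sphere_norm in \<open>auto elim!: eventually_mono simp: norm_eq_1 inner_vec_def\<close>)
  also have "\<dots> = 1"
    using prob_space by simp
  moreover have "(\<Sum>j\<in>UNIV. \<integral>e. e $ j * e $ j \<partial>?U) = (\<Sum>j\<in>(UNIV :: 'n set). \<integral>e. e $ i * e $ i \<partial>?U)"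
    by (rule sum.cong) (auto intro: integral_unif_sphere_component_square_swap)
  ultimately have "real CARD('n) * (\<integral>e. e $ i * e $ i \<partial>?U) = 1"
    by simp
  then show ?thesis
    using integral_unif_sphere_component_mult_neq[of i j]
    by (cases "i = j") (simp_all add: field_simps)
qed

lemma integral_unif_sphere_inner_mult:
  "(\<integral>e. inner v e * inner w e \<partial>(unif_sphere :: (real^'n::finite) measure))
    = inner v w / real CARD('n)"
proof -
  have "inner v e * inner w e = (\<Sum>i\<in>UNIV. \<Sum>j\<in>UNIV. (v $ i * w $ j) * (e $ i * e $ j))" for e
    by (simp add: inner_vec_def sum_product algebra_simps)
  then have "(\<integral>e. inner v e * inner w e \<partial>(unif_sphere :: (real^'n) measure))
      = (\<Sum>i\<in>UNIV. \<Sum>j\<in>UNIV. (v $ i * w $ j) * (\<integral>e. e $ i * e $ j \<partial>unif_sphere))"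
    by (simp add: integrable_unif_sphere_component_mult)
  also have "\<dots> = (\<Sum>i\<in>UNIV. v $ i * w $ i / real CARD('n))"
    by (simp add: integral_unif_sphere_component_mult if_distrib sum.delta cong: if_cong)
  finally show ?thesis
    by (simp add: inner_vec_def sum_divide_distrib)
qed

lemma integral_unif_sphere_quadratic:
  "(\<integral>e. a + b * (inner v e * inner w e) + inner z e \<partial>(unif_sphere :: (real^'n::finite) measure))
    = a + b * inner v w / real CARD('n)"
proof -
  let ?U = "unif_sphere :: (real^'n) measure"
  interpret prob_space ?U by (rule prob_space_unif_sphere)
  have "(\<integral>e. a + b * (inner v e * inner w e) + inner z e \<partial>?U)
      = (\<integral>e. a \<partial>?U) + b * (\<integral>e. inner v e * inner w e \<partial>?U) + (\<integral>e. inner z e \<partial>?U)"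
    by (simp add: integrable_unif_sphere_inner integrable_unif_sphere_inner_mult)
  then show ?thesis
    using prob_space
    by (simp add: integral_unif_sphere_inner integral_unif_sphere_inner_mult del: integral_mult_right_zero)
qed

section \<open>Growth of the step sizes\<close>

lemma rstm_alpha_next_pos: "1 \<le> \<rho> \<Longrightarrow> 0 \<le> A \<Longrightarrow> 0 < rstm_alpha_next \<rho> A"
  unfolding rstm_alpha_next_def by (intro divide_pos_pos add_pos_nonneg) auto

lemma rstm_alpha_next_root:
  assumes "1 \<le> \<rho>" "0 \<le> A"
  shows "\<rho>\<^sup>2 * (rstm_alpha_next \<rho> A)\<^sup>2 = A + rstm_alpha_next \<rho> A"
proof -
  define s where "s = sqrt (1 + 4 * \<rho>\<^sup>2 * A)"
  have s2: "s\<^sup>2 = 1 + 4 * \<rho>\<^sup>2 * A"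
    unfolding s_def using assms by simp
  have "\<rho>\<^sup>2 * ((1 + s) / (2 * \<rho>\<^sup>2))\<^sup>2 = (1 + 2 * s + s\<^sup>2) / (4 * \<rho>\<^sup>2)"
    using assms by (simp add: field_simps power2_eq_square)
  also have "\<dots> = A + (1 + s) / (2 * \<rho>\<^sup>2)"
    unfolding s2 using assms by (simp add: field_simps)
  finally show ?thesis
    unfolding rstm_alpha_next_def s_def[symmetric] .
qed

lemma rstm_A_nonneg: "1 \<le> \<rho> \<Longrightarrow> 0 \<le> rstm_A \<rho> k"
proof (induction k)
  case (Suc k)
  then show ?case
    using rstm_alpha_next_pos[of \<rho> "rstm_A \<rho> k"] by simp
qed simp

lemma rstm_A_mono: "1 \<le> \<rho> \<Longrightarrow> j \<le> k \<Longrightarrow> rstm_A \<rho> j \<le> rstm_A \<rho> k"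
  using lift_Suc_mono_le[of "rstm_A \<rho>" j k]
    rstm_alpha_next_pos[of \<rho>, OF _ rstm_A_nonneg] by (simp add: less_imp_le)

lemma rstm_A_1: "1 \<le> \<rho> \<Longrightarrow> rstm_A \<rho> 1 = 1"
proof -
  assume \<rho>: "1 \<le> \<rho>"
  have "1 + 4 * \<rho>\<^sup>2 * (1 - 1 / \<rho>) = (2 * \<rho> - 1)\<^sup>2"
    using \<rho> by (simp add: field_simps power2_eq_square)
  then have "sqrt (1 + 4 * \<rho>\<^sup>2 * (1 - 1 / \<rho>)) = 2 * \<rho> - 1"
    using \<rho> by simp
  then show ?thesis
    using \<rho> by (simp add: rstm_alpha_next_def field_simps power2_eq_square)
qed

text \<open>\<open>\<rho> \<alpha>\<^sub>k\<^sub>+\<^sub>1 = \<surd>A\<^sub>k\<^sub>+\<^sub>1\<close> and \<open>\<alpha>\<^sub>k\<^sub>+\<^sub>1 \<ge> (1 + 2\<rho>\<surd>A\<^sub>k)/(2\<rho>\<^sup>2)\<close>.\<close>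

lemma sqrt_rstm_A_Suc_ge:
  assumes \<rho>: "1 \<le> \<rho>"
  shows "sqrt (rstm_A \<rho> k) + 1 / (2 * \<rho>) \<le> sqrt (rstm_A \<rho> (Suc k))"
proof -
  let ?A = "rstm_A \<rho> k" and ?a = "rstm_alpha_next \<rho> (rstm_A \<rho> k)"
  have A: "0 \<le> ?A" using rstm_A_nonneg[OF \<rho>] .
  have "rstm_A \<rho> (Suc k) = (\<rho> * ?a)\<^sup>2"
    using rstm_alpha_next_root[OF \<rho> A] by (simp add: power_mult_distrib)
  then have sqrt_A: "sqrt (rstm_A \<rho> (Suc k)) = \<rho> * ?a"
    using rstm_alpha_next_pos[OF \<rho> A] \<rho> by simp
  have "2 * \<rho> * sqrt ?A = sqrt ((2 * \<rho> * sqrt ?A)\<^sup>2)"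
    using \<rho> A by simp
  also have "\<dots> \<le> sqrt (1 + 4 * \<rho>\<^sup>2 * ?A)"
    using A by (intro real_sqrt_le_mono) (simp add: power_mult_distrib)
  finally have "(1 + 2 * \<rho> * sqrt ?A) / (2 * \<rho>) \<le> \<rho> * ?a"
    using \<rho> unfolding rstm_alpha_next_def by (simp add: field_simps power2_eq_square)
  then show ?thesis
    using \<rho> sqrt_A by (simp add: add_divide_distrib)
qed

lemma rstm_A_lower_bound:
  assumes \<rho>: "1 \<le> \<rho>" and k: "1 \<le> k"
  shows "((real k - 1 + 2 * \<rho>) / (2 * \<rho>))\<^sup>2 \<le> rstm_A \<rho> k"
proof -
  have "1 + real m / (2 * \<rho>) \<le> sqrt (rstm_A \<rho> (Suc m))" for m
  proof (induction m)
    case 0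
    then show ?case using rstm_A_1[OF \<rho>] by simp
  next
    case (Suc m)
    then show ?case
      using sqrt_rstm_A_Suc_ge[OF \<rho>, of "Suc m"] \<rho> by (simp add: add_divide_distrib)
  qed
  from this[of "k - 1"] k have "(real k - 1 + 2 * \<rho>) / (2 * \<rho>) \<le> sqrt (rstm_A \<rho> k)"
    using \<rho> by (simp add: field_simps of_nat_diff)
  moreover have "0 \<le> (real k - 1 + 2 * \<rho>) / (2 * \<rho>)"
    using \<rho> k by simp
  ultimately show ?thesis
    using rstm_A_nonneg[OF \<rho>, of k] by (metis power_mono real_sqrt_pow2)
qed

section \<open>Convex functions with a gradient\<close>

lemma GDERIV_directional:
  assumes "GDERIV f x :> g"
  shows "((\<lambda>t. f (x + t *\<^sub>R v)) has_field_derivative inner v g) (at 0)"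
proof -
  have "((\<lambda>t. x + t *\<^sub>R v) has_derivative (\<lambda>t. t *\<^sub>R v)) (at 0)"
    by (auto intro!: derivative_eq_intros)
  moreover have "(f has_derivative (\<lambda>h. inner h g)) (at (x + 0 *\<^sub>R v))"
    using assms by (simp add: gderiv_def)
  ultimately have "((\<lambda>t. f (x + t *\<^sub>R v)) has_derivative (\<lambda>t. inner (t *\<^sub>R v) g)) (at 0)"
    using has_derivative_compose[of "\<lambda>t. x + t *\<^sub>R v" "\<lambda>t. t *\<^sub>R v" 0 UNIV f "\<lambda>h. inner h g"]
    by simp
  then show ?thesis
    by (rule has_derivative_imp_has_field_derivative) simp
qed

lemma convex_on_GDERIV_lower_bound:
  fixes f :: "'a::real_inner \<Rightarrow> real"
  assumes convex: "convex_on UNIV f" and grad: "GDERIV f y :> g"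
  shows "f y + inner g (z - y) \<le> f z"
proof -
  define h where "h t = f (y + t *\<^sub>R (z - y))" for t :: real
  have convex_h: "convex_on UNIV h"
  proof (rule convex_onI)
    fix t a b :: real assume t: "0 < t" "t < 1"
    have "h ((1 - t) *\<^sub>R a + t *\<^sub>R b)
        = f ((1 - t) *\<^sub>R (y + a *\<^sub>R (z - y)) + t *\<^sub>R (y + b *\<^sub>R (z - y)))"
      unfolding h_def by (simp add: algebra_simps)
    also have "\<dots> \<le> (1 - t) * h a + t * h b"
      unfolding h_def using convex_onD[OF convex, of t] t by simp
    finally show "h ((1 - t) *\<^sub>R a + t *\<^sub>R b) \<le> (1 - t) * h a + t * h b" .
  qed simp
  have "(h has_real_derivative inner (z - y) g) (at 0)"
    unfolding h_def by (rule GDERIV_directional[OF grad])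
  from convex_on_imp_above_tangent[OF convex_h _ _ _ this, of 1]
  show ?thesis
    unfolding h_def by (simp add: inner_commute)
qed

lemma
  fixes f :: "'a::euclidean_space \<Rightarrow> real"
  assumes grad: "\<And>x. GDERIV f x :> df x"
  shows borel_measurable_GDERIV_function: "f \<in> borel_measurable borel"
    and borel_measurable_gradient: "df \<in> borel_measurable borel"
proof -
  have "continuous_on UNIV f"
    using grad unfolding gderiv_def
    by (intro continuous_at_imp_continuous_on ballI has_derivative_continuous) blast
  then show f[measurable]: "f \<in> borel_measurable borel"
    by (rule borel_measurable_continuous_onI)
  have "(\<lambda>x. df x \<bullet> b) \<in> borel_measurable borel" for b
  proof (rule borel_measurable_LIMSEQ_real)
    fix x
    have lim: "(\<lambda>h. (f (x + h *\<^sub>R b) - f x) / h) \<midarrow>0\<rightarrow> inner b (df x)"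
      using GDERIV_directional[OF grad, of x b] unfolding DERIV_def by simp
    have "(\<forall>m. inverse (real (Suc m)) \<noteq> 0) \<and> (\<lambda>m. inverse (real (Suc m))) \<longlonglongrightarrow> 0"
      using LIMSEQ_inverse_real_of_nat by simp
    from lim[unfolded LIMSEQ_SEQ_conv[symmetric], rule_format, OF this]
    have "(\<lambda>m. (f (x + inverse (real (Suc m)) *\<^sub>R b) - f x) / inverse (real (Suc m)))
        \<longlonglongrightarrow> inner b (df x)" .
    then show "(\<lambda>m. (f (x + inverse (real (Suc m)) *\<^sub>R b) - f x) / inverse (real (Suc m)))
        \<longlonglongrightarrow> df x \<bullet> b"
      by (simp add: inner_commute)
  qed simp
  then show "df \<in> borel_measurable borel"
    using borel_measurable_euclidean_space by blast
qed

lemma arg_min_quadratic: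
  fixes u g :: "'a::real_inner"
  assumes L: "L > 0"
  shows "arg_min (\<lambda>z. L / 2 * (norm (z - u))\<^sup>2 + a * inner g z) (\<lambda>z. z \<in> UNIV)
    = u - (a / L) *\<^sub>R g"
proof -
  let ?F = "\<lambda>z. L / 2 * (norm (z - u))\<^sup>2 + a * inner g z"
  let ?z = "u - (a / L) *\<^sub>R g"
  have F: "?F z = ?F ?z + L / 2 * (norm (z - ?z))\<^sup>2" for z
    using L by (simp add: power2_norm_eq_inner inner_simps field_simps)
               (simp add: algebra_simps inner_commute power2_eq_square)
  have "is_arg_min ?F (\<lambda>z. z \<in> UNIV) ?z"
    unfolding is_arg_min_def using F L by (auto simp: not_less)
  moreover have "m = ?z" if "is_arg_min ?F (\<lambda>z. z \<in> UNIV) m" for m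
  proof (rule ccontr)
    assume "m \<noteq> ?z"
    then have "?F ?z < ?F m"
      using F[of m] L by (simp add: power2_eq_square)
    then show False
      using that unfolding is_arg_min_def by blast
  qed
  ultimately show ?thesis
    unfolding arg_min_def by (rule some_equality)
qed

section \<open>Arithmetic of the rates\<close>

lemma inverse_le_of_square_le:
  fixes A D n :: real
  assumes "(D / (2 * n))\<^sup>2 \<le> A" "0 < D" "0 < n"
  shows "1 / A \<le> 4 * n\<^sup>2 / D\<^sup>2"
proof -
  have "D\<^sup>2 / (4 * n\<^sup>2) \<le> A"
    using assms by (simp add: power_divide power_mult_distrib)
  moreover have "0 < D\<^sup>2 / (4 * n\<^sup>2)"
    using assms by simp
  ultimately show ?thesis
    using le_imp_inverse_le[of "D\<^sup>2 / (4 * n\<^sup>2)" A] by (simp add: inverse_eq_divide)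
qed

lemma rate_general:
  fixes A D E L P \<Delta> k n :: real
  assumes "(D / (2 * n))\<^sup>2 \<le> A" "0 < D" "0 < n" "0 < L" "0 \<le> P" "k \<le> D\<^sup>2"
    and E: "E \<le> P / A + k * \<Delta>\<^sup>2 / L"
  shows "E \<le> 8 * n\<^sup>2 * P / D\<^sup>2 + 4 / L * D\<^sup>2 * \<Delta>\<^sup>2"
proof -
  have "P / A \<le> P * (4 * n\<^sup>2 / D\<^sup>2)"
    using inverse_le_of_square_le[OF assms(1-3)] \<open>0 \<le> P\<close> mult_left_mono by fastforce
  also have "\<dots> \<le> 8 * n\<^sup>2 * P / D\<^sup>2"
    using assms by (simp add: field_simps)
  finally have "P / A \<le> 8 * n\<^sup>2 * P / D\<^sup>2" .
  moreover have "k * \<Delta>\<^sup>2 / L \<le> 4 / L * D\<^sup>2 * \<Delta>\<^sup>2"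
  proof -
    have "k \<le> 4 * D\<^sup>2"
      using \<open>k \<le> D\<^sup>2\<close> zero_le_power2[of D] by linarith
    then have "k * \<Delta>\<^sup>2 \<le> (4 * D\<^sup>2) * \<Delta>\<^sup>2"
      by (rule mult_right_mono) simp
    then show ?thesis
      using \<open>0 < L\<close> by (simp add: field_simps)
  qed
  ultimately show ?thesis
    using E by linarith
qed

lemma rate_bounded_noise:
  fixes A D E L P \<Delta> k n :: real
  assumes A: "(D / (2 * n))\<^sup>2 \<le> A" and pos: "0 < D" "0 < n" "0 < L" and "0 \<le> P" "0 \<le> \<Delta>"
    and k: "0 \<le> k" "k \<le> D\<^sup>2"
    and E: "E \<le> P / A + k * \<Delta>\<^sup>2 / L"
    and \<Delta>: "\<Delta> \<le> sqrt P * sqrt L / (4 * n * A)"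
  shows "E \<le> 6 * n\<^sup>2 * P / D\<^sup>2"
proof -
  have inv_A: "1 / A \<le> 4 * n\<^sup>2 / D\<^sup>2" "0 < 1 / A"
    using inverse_le_of_square_le[OF A pos(1,2)] A pos
    by (auto intro: order.strict_trans2[OF _ A] simp: power_divide)
  have "P / A \<le> P * (4 * n\<^sup>2 / D\<^sup>2)"
    using inv_A \<open>0 \<le> P\<close> mult_left_mono by fastforce
  then have first: "P / A \<le> 4 * n\<^sup>2 * P / D\<^sup>2"
    by (simp add: mult.commute)
  have "\<Delta>\<^sup>2 \<le> (sqrt P * sqrt L / (4 * n * A))\<^sup>2"
    using \<Delta> \<open>0 \<le> \<Delta>\<close> by (rule power_mono)
  also have "\<dots> = P * L * (1 / A)\<^sup>2 / (16 * n\<^sup>2)"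
    using \<open>0 \<le> P\<close> pos by (simp add: power_divide power_mult_distrib field_simps)
  finally have "k * \<Delta>\<^sup>2 / L \<le> k * (P * L * (1 / A)\<^sup>2 / (16 * n\<^sup>2)) / L"
    using k pos by (intro divide_right_mono mult_left_mono) auto
  also have "\<dots> \<le> D\<^sup>2 * (P * L * (4 * n\<^sup>2 / D\<^sup>2)\<^sup>2 / (16 * n\<^sup>2)) / L"
    using k inv_A pos \<open>0 \<le> P\<close>
    by (intro divide_right_mono mult_mono power_mono mult_left_mono) auto
  also have "\<dots> = n\<^sup>2 * P / D\<^sup>2"
    using pos by (simp add: field_simps power2_eq_square)
  finally have "k * \<Delta>\<^sup>2 / L \<le> n\<^sup>2 * P / D\<^sup>2" .
  moreover have "4 * n\<^sup>2 * P / D\<^sup>2 + n\<^sup>2 * P / D\<^sup>2 \<le> 6 * n\<^sup>2 * P / D\<^sup>2"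
    using \<open>0 \<le> P\<close> pos by (simp add: field_simps)
  ultimately show ?thesis
    using E first by linarith
qed

section \<open>Sequences of independent directions\<close>

lemma (in sequence_space) nn_integral_component_indep_prefix:
  assumes H[measurable]: "(\<lambda>(\<omega>, e). H \<omega> e) \<in> borel_measurable (S \<Otimes>\<^sub>M M)"
    and prefix: "\<And>\<omega> \<omega>'. (\<And>j. j < k \<Longrightarrow> \<omega> j = \<omega>' j) \<Longrightarrow> H \<omega> = H \<omega>'"
  shows "(\<integral>\<^sup>+\<omega>. H \<omega> (\<omega> k) \<partial>S) = (\<integral>\<^sup>+\<omega>. \<integral>\<^sup>+e. H \<omega> e \<partial>M \<partial>S)"
proof -
  have [measurable]: "(\<lambda>\<omega>. \<omega> i) \<in> measurable S M" for i
    by (rule measurable_component_singleton) simp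
  have "(\<integral>\<^sup>+\<omega>. H \<omega> (\<omega> k) \<partial>S)
      = (\<integral>\<^sup>+\<omega>. H \<omega> (\<omega> k) \<partial>distr (S \<Otimes>\<^sub>M S) S (\<lambda>(\<omega>, \<omega>'). comb_seq k \<omega> \<omega>'))"
    by (simp add: PiM_comb_seq)
  also have "\<dots> = (\<integral>\<^sup>+p. H (comb_seq k (fst p) (snd p)) (comb_seq k (fst p) (snd p) k) \<partial>(S \<Otimes>\<^sub>M S))"
    by (subst nn_integral_distr) (auto simp: measurable_comb_seq case_prod_beta)
  also have "\<dots> = (\<integral>\<^sup>+p. H (fst p) (snd p 0) \<partial>(S \<Otimes>\<^sub>M S))"
  proof (intro nn_integral_cong)
    fix p :: "(nat \<Rightarrow> 'a) \<times> (nat \<Rightarrow> 'a)"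
    have "comb_seq k (fst p) (snd p) k = snd p 0"
      using comb_seq_add[of k "fst p" "snd p" 0] by simp
    then show "H (comb_seq k (fst p) (snd p)) (comb_seq k (fst p) (snd p) k) = H (fst p) (snd p 0)"
      using prefix[of "comb_seq k (fst p) (snd p)" "fst p"] by (simp add: comb_seq_less)
  qed
  also have "\<dots> = (\<integral>\<^sup>+\<omega>. \<integral>\<^sup>+\<omega>'. H \<omega> (\<omega>' 0) \<partial>S \<partial>S)"
    using sigma_finite_measure.nn_integral_fst[OF prob_space_imp_sigma_finite[OF P.prob_space_axioms],
        of "\<lambda>p. H (fst p) (snd p 0)" S]
    by simp
  also have "\<dots> = (\<integral>\<^sup>+\<omega>. \<integral>\<^sup>+e. H \<omega> e \<partial>distr S M (\<lambda>\<omega>'. \<omega>' 0) \<partial>S)"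
    by (intro nn_integral_cong nn_integral_distr[symmetric]) simp_all
  also have "\<dots> = (\<integral>\<^sup>+\<omega>. \<integral>\<^sup>+e. H \<omega> e \<partial>M \<partial>S)"
    using distr_PiM_component[of "UNIV :: nat set" "\<lambda>_. M" 0] prob_space by simp
  finally show ?thesis .
qed

lemma sequence_space_unif_sphere: "sequence_space (unif_sphere :: 'a::euclidean_space measure)"
  unfolding sequence_space_def product_prob_space_def product_prob_space_axioms_def
    product_sigma_finite_def
  using prob_space_unif_sphere prob_space_imp_sigma_finite by auto

lemma measurable_sphere_seq_space_component[measurable]:
  "(\<lambda>\<omega>. \<omega> k) \<in> borel_measurable (sphere_seq_space :: (nat \<Rightarrow> 'a::euclidean_space) measure)"
  using measurable_component_singleton[of k UNIV "\<lambda>_. unif_sphere :: 'a measure"]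
  by (simp add: sphere_seq_space_def measurable_cong_sets[OF refl sets_unif_sphere])

lemma prob_space_sphere_seq_space:
  "prob_space (sphere_seq_space :: (nat \<Rightarrow> 'a::euclidean_space) measure)"
proof -
  interpret sequence_space "unif_sphere :: 'a measure"
    by (rule sequence_space_unif_sphere)
  show ?thesis
    unfolding sphere_seq_space_def by (rule P.prob_space_axioms)
qed

lemma integral_le_of_nn_integral_le:
  fixes X :: "'a \<Rightarrow> real"
  assumes [measurable]: "X \<in> borel_measurable M" and nonneg: "\<And>x. 0 \<le> X x"
    and B: "0 \<le> B" "(\<integral>\<^sup>+x. X x \<partial>M) \<le> ennreal B"
  shows "integrable M X" and "(\<integral>x. X x \<partial>M) \<le> B"
proof -
  show integrable: "integrable M X"
    using B nonneg by (intro integrableI_bounded) (auto simp: top.not_eq_extremum le_less_trans)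
  have "ennreal (\<integral>x. X x \<partial>M) = (\<integral>\<^sup>+x. X x \<partial>M)"
    using integrable nonneg by (intro nn_integral_eq_integral[symmetric]) auto
  with B show "(\<integral>x. X x \<partial>M) \<le> B"
    using ennreal_le_iff[OF B(1)] by metis
qed

section \<open>The method on a smooth convex function\<close>

locale rstm_setting =
  fixes f :: "real^'n::finite \<Rightarrow> real" and df :: "real^'n \<Rightarrow> real^'n"
    and L \<Delta> :: real and xs :: "real^'n" and \<xi> :: "real^'n \<Rightarrow> real"
  assumes L_pos: "L > 0"
    and convex: "convex_on UNIV f"
    and grad: "\<And>x. GDERIV f x :> df x"
    and smooth: "\<And>x y. f x \<le> f y + inner (df y) (x - y) + L / 2 * (norm (x - y))\<^sup>2"
    and min: "\<And>x. f xs \<le> f x"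
    and xi_measurable[measurable]: "\<xi> \<in> borel_measurable borel"
    and xi_bound: "\<And>x. \<bar>\<xi> x\<bar> \<le> \<Delta>"
  fixes n :: real
  assumes n_def: "n = real CARD('n)"
begin

declare rstm_A.simps(2) [simp del]

abbreviation A :: "nat \<Rightarrow> real" where "A \<equiv> rstm_A n"

definition alpha :: "nat \<Rightarrow> real" where "alpha k = rstm_alpha_next n (A k)"

text \<open>States are pairs \<open>(x, u)\<close>; \<open>query k s\<close> is the point \<open>y\<^sub>k\<^sub>+\<^sub>1\<close>.\<close>

definition query :: "nat \<Rightarrow> (real^'n) \<times> (real^'n) \<Rightarrow> real^'n" where
  "query k s = (1 / A (Suc k)) *\<^sub>R (alpha k *\<^sub>R snd s + A k *\<^sub>R fst s)"

definition step :: "nat \<Rightarrow> (real^'n) \<times> (real^'n) \<Rightarrow> real^'n \<Rightarrow> (real^'n) \<times> (real^'n)" where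
  "step k s e = (let y = query k s; u' = snd s - (alpha k * n * (inner (df y) e + \<xi> y) / L) *\<^sub>R e
     in (y + (n * alpha k / A (Suc k)) *\<^sub>R (u' - snd s), u'))"

primrec iterate :: "real^'n \<Rightarrow> nat \<Rightarrow> (nat \<Rightarrow> real^'n) \<Rightarrow> (real^'n) \<times> (real^'n)" where
  "iterate u0 0 \<omega> = (u0, u0)"
| "iterate u0 (Suc k) \<omega> = step k (iterate u0 k \<omega>) (\<omega> k)"

definition potential :: "nat \<Rightarrow> (real^'n) \<times> (real^'n) \<Rightarrow> real" where
  "potential k s = A k * (f (fst s) - f xs) + L / 2 * (norm (snd s - xs))\<^sup>2"

lemma n_ge_1: "1 \<le> n"
  by (simp add: n_def)

lemma A_nonneg: "0 \<le> A k"
  by (rule rstm_A_nonneg[OF n_ge_1])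

lemma alpha_pos: "0 < alpha k"
  unfolding alpha_def by (rule rstm_alpha_next_pos[OF n_ge_1 A_nonneg])

lemma A_Suc: "A (Suc k) = A k + alpha k"
  by (simp add: alpha_def rstm_A.simps)

lemma A_Suc_pos: "0 < A (Suc k)"
  using A_nonneg[of k] alpha_pos[of k] by (simp add: A_Suc)

lemma n_alpha_square: "n\<^sup>2 * (alpha k)\<^sup>2 = A (Suc k)"
  unfolding alpha_def using rstm_alpha_next_root[OF n_ge_1 A_nonneg] by (simp add: rstm_A.simps)

lemma potential_nonneg: "0 \<le> potential k s"
  unfolding potential_def using A_nonneg[of k] min[of "fst s"] L_pos by simp

lemma rstm_state_eq_iterate:
  "rstm_state n UNIV (\<lambda>z x. L / 2 * (norm (x - z))\<^sup>2) (\<lambda>x e. (n * (inner (df x) e + \<xi> x)) *\<^sub>R e)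
     u0 \<omega> k = iterate u0 k \<omega>"
proof (induction k)
  case (Suc k)
  show ?case
    by (simp only: rstm_state.simps Suc.IH Let_def prod.case_eq_if arg_min_quadratic[OF L_pos])
       (simp add: step_def query_def alpha_def Let_def rstm_A.simps)
qed simp

lemma step_components:
  fixes k :: nat and s :: "(real^'n) \<times> (real^'n)" and e :: "real^'n"
  defines "c \<equiv> inner (df (query k s)) e + \<xi> (query k s)"
  shows "fst (step k s e) = query k s - (c / L) *\<^sub>R e"
    and "snd (step k s e) = snd s - (alpha k * n * c / L) *\<^sub>R e"
proof -
  have "n * alpha k / A (Suc k) * (alpha k * n * c / L) = c / L"
    using n_alpha_square[of k] A_Suc_pos[of k]
    by (simp add: field_simps power2_eq_square)
  then show "fst (step k s e) = query k s - (c / L) *\<^sub>R e"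
    by (simp add: step_def c_def Let_def)
  show "snd (step k s e) = snd s - (alpha k * n * c / L) *\<^sub>R e"
    by (simp add: step_def c_def Let_def)
qed

lemma query_gap_le:
  "A (Suc k) * (f (query k s) - f xs)
    \<le> A k * (f (fst s) - f xs) + alpha k * inner (df (query k s)) (snd s - xs)"
proof -
  define y where "y = query k s"
  define g where "g = df y"
  have "A (Suc k) *\<^sub>R y = alpha k *\<^sub>R snd s + A k *\<^sub>R fst s"
    using A_Suc_pos[of k] by (simp add: y_def query_def)
  then have combination: "A (Suc k) * inner g y = alpha k * inner g (snd s) + A k * inner g (fst s)"
    by (metis inner_add_right inner_scaleR_right)
  have "A k * (f y - f (fst s)) \<le> A k * inner g (y - fst s)"
    using convex_on_GDERIV_lower_bound[OF convex grad, of y "fst s"] A_nonneg[of k]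
    by (intro mult_left_mono) (auto simp: g_def inner_diff_right)
  moreover have "alpha k * (f y - f xs) \<le> alpha k * inner g (y - xs)"
    using convex_on_GDERIV_lower_bound[OF convex grad, of y xs] alpha_pos[of k]
    by (intro mult_left_mono) (auto simp: g_def inner_diff_right)
  ultimately show ?thesis
    using combination unfolding y_def[symmetric] g_def[symmetric] A_Suc
    by (simp add: inner_diff_right algebra_simps)
qed

lemma step_descent:
  fixes k :: nat and s :: "(real^'n) \<times> (real^'n)" and e :: "real^'n"
  assumes e: "norm e = 1"
  defines "y \<equiv> query k s"
  defines "c \<equiv> inner (df y) e + \<xi> y"
  shows "f (fst (step k s e)) \<le> f y - c * inner (df y) e / L + c\<^sup>2 / (2 * L)"
proof -
  have x': "fst (step k s e) - y = - (c / L) *\<^sub>R e"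
    using step_components(1)[of k s e] by (simp add: y_def c_def)
  have "f (fst (step k s e))
      \<le> f y + inner (df y) (fst (step k s e) - y) + L / 2 * (norm (fst (step k s e) - y))\<^sup>2"
    by (rule smooth)
  also have "\<dots> = f y - c * inner (df y) e / L + c\<^sup>2 / (2 * L)"
    unfolding x' using e L_pos by (simp add: power2_eq_square field_simps)
  finally show ?thesis .
qed

lemma step_distance:
  fixes k :: nat and s :: "(real^'n) \<times> (real^'n)" and e :: "real^'n"
  assumes e: "norm e = 1"
  defines "c \<equiv> inner (df (query k s)) e + \<xi> (query k s)"
  shows "L / 2 * (norm (snd (step k s e) - xs))\<^sup>2
    = L / 2 * (norm (snd s - xs))\<^sup>2 - alpha k * n * c * inner (snd s - xs) e + A (Suc k) * c\<^sup>2 / (2 * L)"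
proof -
  have "inner e e = 1"
    using e by (simp add: norm_eq_1)
  then have expand: "(norm (w - t *\<^sub>R e))\<^sup>2 = (norm w)\<^sup>2 - 2 * t * inner w e + t\<^sup>2" for w t
    unfolding power2_norm_eq_inner
    by (simp add: inner_diff_left inner_diff_right inner_commute power2_eq_square algebra_simps)
  have u': "snd (step k s e) - xs = (snd s - xs) - (alpha k * n * c / L) *\<^sub>R e"
    using step_components(2)[of k s e] by (simp add: c_def)
  have "(norm (snd (step k s e) - xs))\<^sup>2 = (norm (snd s - xs))\<^sup>2
      - 2 * (alpha k * n * c / L) * inner (snd s - xs) e + (alpha k * n * c / L)\<^sup>2"
    unfolding u' by (rule expand)
  then show ?thesis
    using L_pos n_alpha_square[of k, symmetric] by (simp add: field_simps power2_eq_square)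
qed

lemma potential_step_le:
  fixes k :: nat and s :: "(real^'n) \<times> (real^'n)" and e :: "real^'n"
  assumes e: "norm e = 1"
  defines "y \<equiv> query k s"
  defines "c \<equiv> inner (df y) e + \<xi> y"
  shows "potential (Suc k) (step k s e) \<le> potential k s + alpha k * inner (df y) (snd s - xs)
    - alpha k * n * c * inner (snd s - xs) e + A (Suc k) * c * \<xi> y / L"
proof -
  define quadratic where "quadratic = A (Suc k) * c\<^sup>2 / (2 * L)"
  define cross where "cross = A (Suc k) * c * inner (df y) e / L"
  have "A (Suc k) * f (fst (step k s e)) \<le> A (Suc k) * (f y - c * inner (df y) e / L + c\<^sup>2 / (2 * L))"
    using mult_left_mono[OF step_descent[OF e] A_nonneg] by (simp add: y_def c_def)
  then have descent: "A (Suc k) * f (fst (step k s e)) \<le> A (Suc k) * f y - cross + quadratic"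
    unfolding quadratic_def cross_def by (simp add: algebra_simps)
  have distance: "L / 2 * (norm (snd (step k s e) - xs))\<^sup>2
      = L / 2 * (norm (snd s - xs))\<^sup>2 - alpha k * n * c * inner (snd s - xs) e + quadratic"
    using step_distance[OF e, of k s] by (simp add: quadratic_def y_def c_def)
  have "2 * quadratic - cross = A (Suc k) * c * \<xi> y / L"
    unfolding quadratic_def cross_def c_def using L_pos by (simp add: power2_eq_square field_simps)
  moreover have "potential (Suc k) (step k s e)
      = A (Suc k) * f (fst (step k s e)) - A (Suc k) * f xs + L / 2 * (norm (snd (step k s e) - xs))\<^sup>2"
    by (simp add: potential_def right_diff_distrib)
  moreover have "potential k s = A k * (f (fst s) - f xs) + L / 2 * (norm (snd s - xs))\<^sup>2"
    by (simp add: potential_def)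
  moreover have "A (Suc k) * f y - A (Suc k) * f xs
      \<le> A k * (f (fst s) - f xs) + alpha k * inner (df y) (snd s - xs)"
    using query_gap_le[of k s] by (simp add: y_def right_diff_distrib)
  ultimately show ?thesis
    using descent distance by linarith
qed

text \<open>
  In expectation over \<open>e\<close> the first-order terms cancel: \<open>n \<integral> \<langle>g, e\<rangle> \<langle>w, e\<rangle> = \<langle>g, w\<rangle>\<close>.
\<close>

lemma nn_integral_potential_step_le:
  "(\<integral>\<^sup>+e. ennreal (potential (Suc k) (step k s e)) \<partial>unif_sphere)
    \<le> ennreal (potential k s + A (Suc k) * \<Delta>\<^sup>2 / L)"
proof -
  interpret prob_space "unif_sphere :: (real^'n) measure"
    by (rule prob_space_unif_sphere)
  define y where "y = query k s"
  define g where "g = df y"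
  define w where "w = snd s - xs"
  define R where "R e = potential k s + alpha k * inner g w + A (Suc k) * (\<xi> y)\<^sup>2 / L
    + (- alpha k * n) * (inner g e * inner w e) + inner ((- alpha k * n * \<xi> y) *\<^sub>R w + (A (Suc k) * \<xi> y / L) *\<^sub>R g) e"
    for e :: "real^'n"
  have bound: "AE e in unif_sphere. potential (Suc k) (step k s e) \<le> R e"
    using AE_unif_sphere_norm
  proof eventually_elim
    case (elim e)
    from potential_step_le[OF elim, of k s] show ?case
      unfolding R_def y_def[symmetric] g_def[symmetric] w_def[symmetric]
      by (simp add: inner_add_left inner_commute[of w e] algebra_simps power2_eq_square add_divide_distrib)
  qed
  have "(\<integral>e. R e \<partial>unif_sphere) = potential k s + A (Suc k) * (\<xi> y)\<^sup>2 / L"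
    unfolding R_def by (simp only: integral_unif_sphere_quadratic) (simp add: n_def)
  also have "\<dots> \<le> potential k s + A (Suc k) * \<Delta>\<^sup>2 / L"
  proof -
    have "(\<xi> y)\<^sup>2 \<le> \<Delta>\<^sup>2"
      using xi_bound[of y] by (metis abs_ge_zero power2_abs power_mono)
    then show ?thesis
      using A_nonneg[of "Suc k"] L_pos by (intro add_left_mono divide_right_mono mult_left_mono) auto
  qed
  finally have integral_R: "(\<integral>e. R e \<partial>unif_sphere) \<le> potential k s + A (Suc k) * \<Delta>\<^sup>2 / L" .
  have integrable_R: "integrable unif_sphere R"
    unfolding R_def by (intro Bochner_Integration.integrable_add integrable_mult_right
        integrable_unif_sphere_inner integrable_unif_sphere_inner_mult integrable_const)
  have "(\<integral>\<^sup>+e. ennreal (potential (Suc k) (step k s e)) \<partial>unif_sphere) \<le> (\<integral>\<^sup>+e. ennreal (R e) \<partial>unif_sphere)"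
    using bound by (intro nn_integral_mono_AE) (auto elim!: eventually_mono intro: ennreal_leI)
  also have "\<dots> = ennreal (\<integral>e. R e \<partial>unif_sphere)"
    using bound
    by (intro nn_integral_eq_integral integrable_R)
       (auto elim!: eventually_mono intro: order_trans[OF potential_nonneg])
  finally show ?thesis
    using integral_R ennreal_leI order_trans by blast
qed

lemma
  shows borel_measurable_f[measurable]: "f \<in> borel_measurable borel"
    and borel_measurable_df[measurable]: "df \<in> borel_measurable borel"
  using grad by (rule borel_measurable_GDERIV_function borel_measurable_gradient)+

lemma measurable_step[measurable (raw)]:
  assumes [measurable]: "s \<in> M \<rightarrow>\<^sub>M borel \<Otimes>\<^sub>M borel" "e \<in> borel_measurable M"
  shows "(\<lambda>\<omega>. step k (s \<omega>) (e \<omega>)) \<in> M \<rightarrow>\<^sub>M borel \<Otimes>\<^sub>M borel"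
  unfolding step_def query_def Let_def by measurable

lemma measurable_potential[measurable (raw)]:
  assumes [measurable]: "s \<in> M \<rightarrow>\<^sub>M borel \<Otimes>\<^sub>M borel"
  shows "(\<lambda>\<omega>. potential k (s \<omega>)) \<in> borel_measurable M"
  unfolding potential_def by measurable

lemma measurable_iterate[measurable]:
  "iterate u0 k \<in> (sphere_seq_space :: (nat \<Rightarrow> real^'n) measure) \<rightarrow>\<^sub>M borel \<Otimes>\<^sub>M borel"
  by (induction k) simp_all

lemma iterate_prefix: "(\<And>j. j < k \<Longrightarrow> \<omega> j = \<omega>' j) \<Longrightarrow> iterate u0 k \<omega> = iterate u0 k \<omega>'"
  by (induction k) auto

lemma nn_integral_potential_iterate_Suc_le:
  "(\<integral>\<^sup>+\<omega>. ennreal (potential (Suc k) (iterate u0 (Suc k) \<omega>)) \<partial>sphere_seq_space)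
    \<le> (\<integral>\<^sup>+\<omega>. ennreal (potential k (iterate u0 k \<omega>)) \<partial>sphere_seq_space) + A (Suc k) * \<Delta>\<^sup>2 / L"
proof -
  interpret sequence_space "unif_sphere :: (real^'n) measure"
    by (rule sequence_space_unif_sphere)
  have [measurable]: "iterate u0 k \<in> S \<rightarrow>\<^sub>M borel \<Otimes>\<^sub>M borel"
    using measurable_iterate by (simp add: sphere_seq_space_def)
  have "(\<integral>\<^sup>+\<omega>. ennreal (potential (Suc k) (iterate u0 (Suc k) \<omega>)) \<partial>S)
      = (\<integral>\<^sup>+\<omega>. \<integral>\<^sup>+e. ennreal (potential (Suc k) (step k (iterate u0 k \<omega>) e)) \<partial>unif_sphere \<partial>S)"
    unfolding iterate.simps(2)
  proof (rule nn_integral_component_indep_prefix)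
    show "(\<lambda>(\<omega>, e). ennreal (potential (Suc k) (step k (iterate u0 k \<omega>) e)))
        \<in> borel_measurable (S \<Otimes>\<^sub>M unif_sphere)"
      by measurable
  next
    fix \<omega> \<omega>' :: "nat \<Rightarrow> real^'n"
    assume "\<And>j. j < k \<Longrightarrow> \<omega> j = \<omega>' j"
    then have "iterate u0 k \<omega> = iterate u0 k \<omega>'"
      by (rule iterate_prefix)
    then show "(\<lambda>e. ennreal (potential (Suc k) (step k (iterate u0 k \<omega>) e)))
        = (\<lambda>e. ennreal (potential (Suc k) (step k (iterate u0 k \<omega>') e)))"
      by simp
  qed
  also have "\<dots> \<le> (\<integral>\<^sup>+\<omega>. ennreal (potential k (iterate u0 k \<omega>)) + A (Suc k) * \<Delta>\<^sup>2 / L \<partial>S)"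
  proof (rule nn_integral_mono)
    fix \<omega>
    have "ennreal (potential k (iterate u0 k \<omega>) + A (Suc k) * \<Delta>\<^sup>2 / L)
        = ennreal (potential k (iterate u0 k \<omega>)) + ennreal (A (Suc k) * \<Delta>\<^sup>2 / L)"
      using potential_nonneg A_nonneg[of "Suc k"] L_pos by (intro ennreal_plus) auto
    with nn_integral_potential_step_le
    show "(\<integral>\<^sup>+e. ennreal (potential (Suc k) (step k (iterate u0 k \<omega>) e)) \<partial>unif_sphere)
        \<le> ennreal (potential k (iterate u0 k \<omega>)) + ennreal (A (Suc k) * \<Delta>\<^sup>2 / L)"
      by metis
  qed
  also have "\<dots> = (\<integral>\<^sup>+\<omega>. ennreal (potential k (iterate u0 k \<omega>)) \<partial>S) + A (Suc k) * \<Delta>\<^sup>2 / L"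
    using P.emeasure_space_1 by (subst nn_integral_add) auto
  finally show ?thesis
    by (simp add: sphere_seq_space_def)
qed

lemma nn_integral_potential_iterate_le:
  "(\<integral>\<^sup>+\<omega>. ennreal (potential k (iterate u0 k \<omega>)) \<partial>sphere_seq_space)
    \<le> ennreal (potential 0 (u0, u0) + real k * A k * \<Delta>\<^sup>2 / L)"
proof (induction k)
  case 0
  interpret prob_space "sphere_seq_space :: (nat \<Rightarrow> real^'n) measure"
    by (rule prob_space_sphere_seq_space)
  show ?case
    by (simp add: emeasure_space_1)
next
  case (Suc k)
  have "(\<integral>\<^sup>+\<omega>. ennreal (potential (Suc k) (iterate u0 (Suc k) \<omega>)) \<partial>sphere_seq_space)
      \<le> ennreal (potential 0 (u0, u0) + real k * A k * \<Delta>\<^sup>2 / L) + ennreal (A (Suc k) * \<Delta>\<^sup>2 / L)"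
    using nn_integral_potential_iterate_Suc_le[of k u0] Suc.IH by (meson add_right_mono order_trans)
  also have "\<dots> = ennreal (potential 0 (u0, u0) + real k * A k * \<Delta>\<^sup>2 / L + A (Suc k) * \<Delta>\<^sup>2 / L)"
    using potential_nonneg[of 0 "(u0, u0)"] A_nonneg L_pos
    by (intro ennreal_plus[symmetric] add_nonneg_nonneg divide_nonneg_pos mult_nonneg_nonneg) auto
  also have "\<dots> \<le> ennreal (potential 0 (u0, u0) + real (Suc k) * A (Suc k) * \<Delta>\<^sup>2 / L)"
  proof (rule ennreal_leI)
    have "real k * A k * \<Delta>\<^sup>2 \<le> real k * A (Suc k) * \<Delta>\<^sup>2"
      using rstm_A_mono[OF n_ge_1, of k "Suc k"] by (simp add: mult_left_mono mult_right_mono)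
    then show "potential 0 (u0, u0) + real k * A k * \<Delta>\<^sup>2 / L + A (Suc k) * \<Delta>\<^sup>2 / L
        \<le> potential 0 (u0, u0) + real (Suc k) * A (Suc k) * \<Delta>\<^sup>2 / L"
      using L_pos by (simp add: field_simps)
  qed
  finally show ?case .
qed

lemma expected_gap_le:
  assumes k: "1 \<le> k"
  shows "(\<integral>\<omega>. f (fst (iterate u0 k \<omega>)) \<partial>sphere_seq_space) - f xs
    \<le> potential 0 (u0, u0) / A k + real k * \<Delta>\<^sup>2 / L"
proof -
  interpret prob_space "sphere_seq_space :: (nat \<Rightarrow> real^'n) measure"
    by (rule prob_space_sphere_seq_space)
  define B where "B = potential 0 (u0, u0) + real k * A k * \<Delta>\<^sup>2 / L"
  define Y where "Y \<omega> = A k * (f (fst (iterate u0 k \<omega>)) - f xs)" for \<omega>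
  have A_k: "1 \<le> A k"
    using rstm_A_mono[OF n_ge_1 k] rstm_A_1[OF n_ge_1] by simp
  have [measurable]: "Y \<in> borel_measurable sphere_seq_space"
    unfolding Y_def using measurable_iterate[of u0 k] by measurable
  have Y_nonneg: "0 \<le> Y \<omega>" for \<omega>
    unfolding Y_def using A_k min by simp
  have "(\<integral>\<^sup>+\<omega>. Y \<omega> \<partial>sphere_seq_space) \<le> (\<integral>\<^sup>+\<omega>. potential k (iterate u0 k \<omega>) \<partial>sphere_seq_space)"
    unfolding Y_def potential_def using L_pos by (intro nn_integral_mono ennreal_leI) simp
  also have "\<dots> \<le> B"
    unfolding B_def by (rule nn_integral_potential_iterate_le)
  finally have Y_bound: "(\<integral>\<^sup>+\<omega>. Y \<omega> \<partial>sphere_seq_space) \<le> B" .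
  have "0 \<le> B"
    unfolding B_def using potential_nonneg A_nonneg L_pos
    by (intro add_nonneg_nonneg divide_nonneg_pos mult_nonneg_nonneg) auto
  note Y = integral_le_of_nn_integral_le[OF _ Y_nonneg this Y_bound]
  have "integrable sphere_seq_space (\<lambda>\<omega>. Y \<omega> / A k + f xs)"
    using Y(1) by simp
  then have "integrable sphere_seq_space (\<lambda>\<omega>. f (fst (iterate u0 k \<omega>)))"
    using A_k by (simp add: Y_def)
  then have "(\<integral>\<omega>. f (fst (iterate u0 k \<omega>)) \<partial>sphere_seq_space) - f xs
      = (\<integral>\<omega>. Y \<omega> \<partial>sphere_seq_space) / A k"
    using A_k prob_space by (simp add: Y_def)
  also have "\<dots> \<le> B / A k"
    using Y(2) A_k by (simp add: divide_right_mono)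
  also have "\<dots> = potential 0 (u0, u0) / A k + real k * \<Delta>\<^sup>2 / L"
    using A_k by (simp add: B_def add_divide_distrib)
  finally show ?thesis .
qed


lemma expected_gap_rates:
  fixes k :: nat and u0 :: "real^'n"
  assumes k: "1 \<le> k"
  defines "D \<equiv> real k - 1 + 2 * n" and "P \<equiv> potential 0 (u0, u0)"
  shows "(\<integral>\<omega>. f (fst (iterate u0 k \<omega>)) \<partial>sphere_seq_space) - f xs
      \<le> 8 * n\<^sup>2 * P / D\<^sup>2 + 4 / L * D\<^sup>2 * \<Delta>\<^sup>2"
    and "\<Delta> \<le> sqrt P * sqrt L / (4 * n * A k) \<Longrightarrow>
      (\<integral>\<omega>. f (fst (iterate u0 k \<omega>)) \<partial>sphere_seq_space) - f xs \<le> 6 * n\<^sup>2 * P / D\<^sup>2"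
proof -
  have A_k: "(D / (2 * n))\<^sup>2 \<le> A k"
    unfolding D_def by (rule rstm_A_lower_bound[OF n_ge_1 k])
  have D: "0 < D" "real k \<le> D\<^sup>2"
  proof -
    have "real k \<le> D" "1 \<le> D"
      using n_ge_1 k by (auto simp: D_def)
    then show "0 < D" "real k \<le> D\<^sup>2"
      by (simp_all add: power2_eq_square order_trans[OF _ mult_right_mono[of 1]])
  qed
  have "0 \<le> P" "0 \<le> \<Delta>" "0 < n"
    using potential_nonneg xi_bound[of xs] n_ge_1 by (auto simp: P_def)
  note gap = expected_gap_le[OF k, of u0, folded P_def]
  show "(\<integral>\<omega>. f (fst (iterate u0 k \<omega>)) \<partial>sphere_seq_space) - f xs
      \<le> 8 * n\<^sup>2 * P / D\<^sup>2 + 4 / L * D\<^sup>2 * \<Delta>\<^sup>2"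
    by (rule rate_general[OF A_k D(1) \<open>0 < n\<close> L_pos \<open>0 \<le> P\<close> D(2) gap])
  show "\<Delta> \<le> sqrt P * sqrt L / (4 * n * A k) \<Longrightarrow>
      (\<integral>\<omega>. f (fst (iterate u0 k \<omega>)) \<partial>sphere_seq_space) - f xs \<le> 6 * n\<^sup>2 * P / D\<^sup>2"
    by (rule rate_bounded_noise[OF A_k D(1) \<open>0 < n\<close> L_pos \<open>0 \<le> P\<close> \<open>0 \<le> \<Delta>\<close> _ D(2) gap]) simp
qed
end

theorem corollary1:
  fixes f :: "real ^ 'n \<Rightarrow> real" and df :: "real ^ 'n \<Rightarrow> real ^ 'n"
    and L \<Delta> :: real and xs u0 :: "real ^ 'n" and \<xi> :: "real ^ 'n \<Rightarrow> real"
  defines "n \<equiv> real CARD('n)"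
  defines "G \<equiv> (\<lambda>x e. (n * (inner (df x) e + \<xi> x)) *\<^sub>R e)"
  defines "V \<equiv> (\<lambda>z x. L / 2 * (norm (x - z))\<^sup>2)"
  defines "xk \<equiv> rstm_x n UNIV V G u0"
  defines "P0 \<equiv> sqrt ((1 - 1 / n) * (f u0 - f xs) + L / 2 * (norm (u0 - xs))\<^sup>2)"
  assumes L_pos: "L > 0"
    and convex: "convex_on UNIV f"
    and grad: "\<And>x. GDERIV f x :> df x"
    and smooth: "\<And>x y. f x \<le> f y + inner (df y) (x - y) + L / 2 * (norm (x - y))\<^sup>2"
    and min: "\<And>x. f xs \<le> f x"
    and xi_meas: "\<xi> \<in> borel_measurable borel"
    and xi_bound: "\<And>x. \<bar>\<xi> x\<bar> \<le> \<Delta>"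
  shows "(\<forall>k\<ge>1. \<Delta> \<le> P0 * sqrt L / (4 * n * rstm_A n k) \<longrightarrow>
            (\<integral>\<omega>. f (xk \<omega> k) \<partial>sphere_seq_space) - f xs \<le> 6 * n\<^sup>2 * P0\<^sup>2 / (real k - 1 + 2 * n)\<^sup>2)
       \<and> (\<forall>k\<ge>1. (\<integral>\<omega>. f (xk \<omega> k) \<partial>sphere_seq_space) - f xs
            \<le> 8 * n\<^sup>2 * P0\<^sup>2 / (real k - 1 + 2 * n)\<^sup>2 + 4 / L * (real k - 1 + 2 * n)\<^sup>2 * \<Delta>\<^sup>2)"
proof -
  interpret rstm_setting f df L \<Delta> xs \<xi> n
    by unfold_locales (use L_pos convex grad smooth min xi_meas xi_bound n_def in auto)
  have xk: "xk \<omega> k = fst (iterate u0 k \<omega>)" for \<omega> k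
    unfolding xk_def rstm_x_def G_def V_def rstm_state_eq_iterate ..
  have P0: "P0 = sqrt (potential 0 (u0, u0))" "P0\<^sup>2 = potential 0 (u0, u0)"
    using potential_nonneg[of 0 "(u0, u0)"] by (simp_all add: P0_def potential_def)
  show ?thesis
    unfolding xk P0(2) using expected_gap_rates[of _ u0] by (simp add: P0(1))
qed

end
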